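(* Fix $\lambda_p,\lambda_s\in(0,1)$ and $p_q\in(0,1)$, and consider $p_a\in[0,1]$ ranging over values for which $(\lambda_p,\lambda_s)$ is in the stable region, i.e. $\lambda_p<\frac{f_{sd}(1-p_q)\mu_p}{f_{sd}(1-p_q)+p_a f_{ps}(1-f_{pd})}$ and $\lambda_s<p_q f_{sd}(1-\lambda_p/\mu_p)$ with $\mu_p=f_{pd}+p_a f_{ps}(1-f_{pd})$. Then the average PU delay $D_p$ is monotonically decreasing in $p_a$ if $p_q<1-\frac{f_{pd}}{f_{sd}}$, monotonically increasing in $p_a$ if $p_q>1-\frac{f_{pd}}{f_{sd}}$ (and constant in $p_a$ if $p_q=1-\frac{f_{pd}}{f_{sd}}$), while the average SU delay $D_s$ is monotonically decreasing in $p_a$ for every $p_q\in(0,1)$.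
   Context: Constants $f_{pd},f_{ps},f_{sd}\in(0,1)$ with $f_{pd}<f_{sd}$. Set $a=p_a f_{ps}(1-f_{pd})$, $\mu_p=f_{pd}+a$. $D_p=(N_p+N_{sp})/\lambda_p$ and $D_s=N_s/\lambda_s$, where $N_p=\frac{\lambda_p-\lambda_p^2}{\mu_p-\lambda_p}$, $N_{sp}=\frac{m\lambda_p^2+n\lambda_p}{\alpha\lambda_p^2+\beta\lambda_p+\gamma}$, $N_s=\frac{\lambda_p\lambda_s A+(\lambda_s^2-\lambda_s)B(B+\lambda_p)}{BC}$ with $m=a\big[\frac{(1-p_q)f_{sd}-f_{pd}}{\mu_p}-(1-p_q)f_{sd}-a\big]$, $n=a\mu_p$, $\alpha=(1-p_q)f_{sd}+a$, $\beta=\mu_p[-2(1-p_q)f_{sd}-a]$, $\gamma=(1-p_q)f_{sd}\mu_p^2$, $A=p_q f_{sd}(\mu_p-1)$, $B=\mu_p-\lambda_p$, $C=(\lambda_s-p_q f_{sd})\mu_p+p_q f_{sd}\lambda_p$. These are the average packet delays of the PU and SU in a cognitive relaying system where the SU serves its own queue w.p. $p_q$ (relay queue w.p. $1-p_q$) when the PU is idle, and admits undelivered overheard PU packets to its relay queue w.p. $p_a$. *)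

theory Defs
  imports Complex_Main
begin

definition a_val :: "real \<Rightarrow> real \<Rightarrow> real \<Rightarrow> real" where
  "a_val fpd fps pa = pa * fps * (1 - fpd)"

definition mu_p :: "real \<Rightarrow> real \<Rightarrow> real \<Rightarrow> real" where
  "mu_p fpd fps pa = fpd + a_val fpd fps pa"

definition N_p :: "real \<Rightarrow> real \<Rightarrow> real \<Rightarrow> real \<Rightarrow> real" where
  "N_p fpd fps pa lp = (lp - lp^2) / (mu_p fpd fps pa - lp)"

definition N_sp :: "real \<Rightarrow> real \<Rightarrow> real \<Rightarrow> real \<Rightarrow> real \<Rightarrow> real \<Rightarrow> real" where
  "N_sp fpd fps fsd pq pa lp =
    (let a = a_val fpd fps pa; mu = mu_p fpd fps pa;
         m = a * (((1 - pq) * fsd - fpd) / mu - (1 - pq) * fsd - a);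
         n = a * mu;
         \<alpha> = (1 - pq) * fsd + a;
         \<beta> = mu * (- 2 * (1 - pq) * fsd - a);
         \<gamma> = (1 - pq) * fsd * mu^2
     in (m * lp^2 + n * lp) / (\<alpha> * lp^2 + \<beta> * lp + \<gamma>))"

definition N_s :: "real \<Rightarrow> real \<Rightarrow> real \<Rightarrow> real \<Rightarrow> real \<Rightarrow> real \<Rightarrow> real \<Rightarrow> real" where
  "N_s fpd fps fsd pq pa lp ls =
    (let mu = mu_p fpd fps pa;
         A = pq * fsd * (mu - 1);
         B = mu - lp;
         C = (ls - pq * fsd) * mu + pq * fsd * lp
     in (lp * ls * A + (ls^2 - ls) * B * (B + lp)) / (B * C))"

definition D_p :: "real \<Rightarrow> real \<Rightarrow> real \<Rightarrow> real \<Rightarrow> real \<Rightarrow> real \<Rightarrow> real" where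
  "D_p fpd fps fsd pq pa lp = (N_p fpd fps pa lp + N_sp fpd fps fsd pq pa lp) / lp"

definition D_s :: "real \<Rightarrow> real \<Rightarrow> real \<Rightarrow> real \<Rightarrow> real \<Rightarrow> real \<Rightarrow> real \<Rightarrow> real" where
  "D_s fpd fps fsd pq pa lp ls = N_s fpd fps fsd pq pa lp ls / ls"

definition stable :: "real \<Rightarrow> real \<Rightarrow> real \<Rightarrow> real \<Rightarrow> real \<Rightarrow> real \<Rightarrow> real \<Rightarrow> bool" where
  "stable fpd fps fsd pq pa lp ls \<longleftrightarrow>
     lp < fsd * (1 - pq) * mu_p fpd fps pa / (fsd * (1 - pq) + pa * fps * (1 - fpd)) \<and>
     ls < pq * fsd * (1 - lp / mu_p fpd fps pa)"

definition PA_set :: "real \<Rightarrow> real \<Rightarrow> real \<Rightarrow> real \<Rightarrow> real \<Rightarrow> real \<Rightarrow> real set" where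
  "PA_set fpd fps fsd pq lp ls = {pa. 0 \<le> pa \<and> pa \<le> 1 \<and> stable fpd fps fsd pq pa lp ls}"

end

theory Submission imports Defs begin

text \<open>
Both delays depend on \<open>p\<^sub>a\<close> only through \<open>\<mu>\<^sub>p\<close>, which is strictly increasing in \<open>p\<^sub>a\<close>.
Written as a function of \<open>t = \<mu>\<^sub>p\<close>, the PU delay is a rational function whose derivative is
\<open>-(F - f\<^sub>p\<^sub>d)\<close> times a quantity that is positive on the stable region, where
\<open>F = (1 - p\<^sub>q) f\<^sub>s\<^sub>d\<close> is the service rate of the relay queue; for \<open>F = f\<^sub>p\<^sub>d\<close> it is constant.
The SU delay is a sum of two terms, each of which decreases in \<open>t\<close> on the stable region.
\<close>

text \<open>The PU delay as a function of \<open>t = \<mu>\<^sub>p\<close>, with \<open>F = (1 - p\<^sub>q) f\<^sub>s\<^sub>d\<close>, \<open>f = f\<^sub>p\<^sub>d\<close>, \<open>l = \<lambda>\<^sub>p\<close>.\<close>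

definition Dp_num :: "real \<Rightarrow> real \<Rightarrow> real \<Rightarrow> real \<Rightarrow> real" where
  "Dp_num F f l t = (1-F)*t^3 + ((F-f) - l*(1-f))*t^2 + f*l*(F-f)*t - f*l*(F-f)"

definition Dp_den :: "real \<Rightarrow> real \<Rightarrow> real \<Rightarrow> real \<Rightarrow> real" where
  "Dp_den F f l t = t*(t-l)*((F-l)*t - l*(F-f))"

definition Dp_rat :: "real \<Rightarrow> real \<Rightarrow> real \<Rightarrow> real \<Rightarrow> real" where
  "Dp_rat F f l t = 1 + Dp_num F f l t / Dp_den F f l t"

text \<open>The numerator of the derivative of \<open>Dp_rat\<close> divided by \<open>-(F - f)\<close>, arranged so that
  every summand is visibly nonnegative on \<open>Dp_region\<close>.\<close>

definition Dp_slope :: "real \<Rightarrow> real \<Rightarrow> real \<Rightarrow> real \<Rightarrow> real" where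
  "Dp_slope F f l t =
     ((t-f)*t*(t*(1-l) + l*(1-t)) + f*(t-l)^2) * ((F-l)*t - l*(F-f))
     + l*t*(t-f)*((t-l)^2 + l*(t-f)*(1-t))"

text \<open>The PU part of the stability condition, multiplied out, together with \<open>f\<^sub>p\<^sub>d \<le> \<mu>\<^sub>p \<le> 1\<close>.\<close>

definition Dp_region :: "real \<Rightarrow> real \<Rightarrow> real \<Rightarrow> real \<Rightarrow> bool" where
  "Dp_region F f l t \<longleftrightarrow> f \<le> t \<and> t \<le> 1 \<and> l < t \<and> l*(F-f) < (F-l)*t"

lemma Dp_region_between:
  assumes "Dp_region F f l a" "Dp_region F f l b" "a \<le> t" "t \<le> b"
  shows "Dp_region F f l t"
proof -
  have "(F-l)*a \<le> (F-l)*t \<or> (F-l)*b \<le> (F-l)*t"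
    using assms(3,4) by (cases "0 \<le> F - l") (auto intro: mult_left_mono mult_left_mono_neg)
  then show ?thesis using assms unfolding Dp_region_def by auto
qed

lemma has_real_derivative_Dp_rat:
  assumes "Dp_den F f l t \<noteq> 0"
  shows "(Dp_rat F f l has_real_derivative
           -(F-f) * Dp_slope F f l t / (Dp_den F f l t * Dp_den F f l t)) (at t)"
proof -
  define dN where "dN = 3*(1-F)*t^2 + 2*((F-f) - l*(1-f))*t + f*l*(F-f)"
  define dD where "dD = (t-l)*((F-l)*t - l*(F-f)) + t*((F-l)*t - l*(F-f)) + t*(t-l)*(F-l)"
  have "(Dp_num F f l has_real_derivative dN) (at t)"
    unfolding Dp_num_def[abs_def] dN_def
    by (rule derivative_eq_intros refl | simp add: algebra_simps)+
  moreover have "(Dp_den F f l has_real_derivative dD) (at t)"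
    unfolding Dp_den_def[abs_def] dD_def
    by (rule derivative_eq_intros refl | simp add: algebra_simps)+
  ultimately have "((\<lambda>t. 1 + Dp_num F f l t / Dp_den F f l t) has_real_derivative
      0 + (dN * Dp_den F f l t - Dp_num F f l t * dD) / (Dp_den F f l t * Dp_den F f l t)) (at t)"
    by (intro DERIV_add DERIV_const DERIV_divide assms)
  moreover have "dN * Dp_den F f l t - Dp_num F f l t * dD = -(F-f) * Dp_slope F f l t"
    unfolding dN_def dD_def Dp_num_def Dp_den_def Dp_slope_def by algebra
  ultimately show ?thesis unfolding Dp_rat_def[abs_def] by simp
qed

lemma Dp_den_pos:
  assumes "Dp_region F f l t" "0 < l"
  shows "0 < Dp_den F f l t"
  using assms unfolding Dp_region_def Dp_den_def by (intro mult_pos_pos) auto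

lemma Dp_slope_pos:
  assumes "Dp_region F f l t" "0 < f" "0 < l" "l < 1"
  shows "0 < Dp_slope F f l t"
proof -
  have t: "f \<le> t" "t \<le> 1" "l < t" and W: "0 < (F-l)*t - l*(F-f)"
    using assms(1) unfolding Dp_region_def by auto
  have "0 \<le> (t-f)*t*(t*(1-l) + l*(1-t))"
    using t assms by (intro mult_nonneg_nonneg add_nonneg_nonneg) auto
  moreover have "0 < f*(t-l)^2" using t assms by simp
  ultimately have "0 < ((t-f)*t*(t*(1-l) + l*(1-t)) + f*(t-l)^2) * ((F-l)*t - l*(F-f))"
    using W by (intro mult_pos_pos) auto
  moreover have "0 \<le> l*t*(t-f)*((t-l)^2 + l*(t-f)*(1-t))"
    using t assms by (intro mult_nonneg_nonneg add_nonneg_nonneg) auto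
  ultimately show ?thesis unfolding Dp_slope_def by linarith
qed

lemma Dp_rat_derivative_sgn:
  assumes "Dp_region F f l t" "0 < f" "0 < l" "l < 1"
  shows "\<exists>y. (Dp_rat F f l has_real_derivative y) (at t) \<and> sgn y = sgn (f - F)"
proof -
  have "0 < Dp_den F f l t" "0 < Dp_slope F f l t"
    using Dp_den_pos Dp_slope_pos assms by auto
  then show ?thesis
    using has_real_derivative_Dp_rat[of F f l t] by (auto simp: sgn_mult sgn_divide)
qed

lemma Dp_rat_strict_antimono:
  assumes "a < b" "f < F" "0 < f" "0 < l" "l < 1"
    and "Dp_region F f l a" "Dp_region F f l b"
  shows "Dp_rat F f l b < Dp_rat F f l a"
proof (rule DERIV_neg_imp_decreasing[OF \<open>a < b\<close>])
  fix t assume "a \<le> t" "t \<le> b"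
  then have "Dp_region F f l t" using Dp_region_between assms(6,7) by blast
  then obtain y where "(Dp_rat F f l has_real_derivative y) (at t)" "sgn y = sgn (f - F)"
    using Dp_rat_derivative_sgn assms(3-5) by blast
  then show "\<exists>y. (Dp_rat F f l has_real_derivative y) (at t) \<and> y < 0"
    using \<open>f < F\<close> by (auto simp: sgn_if split: if_splits)
qed

lemma Dp_rat_strict_mono:
  assumes "a < b" "F < f" "0 < f" "0 < l" "l < 1"
    and "Dp_region F f l a" "Dp_region F f l b"
  shows "Dp_rat F f l a < Dp_rat F f l b"
proof (rule DERIV_pos_imp_increasing[OF \<open>a < b\<close>])
  fix t assume "a \<le> t" "t \<le> b"
  then have "Dp_region F f l t" using Dp_region_between assms(6,7) by blast
  then obtain y where "(Dp_rat F f l has_real_derivative y) (at t)" "sgn y = sgn (f - F)"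
    using Dp_rat_derivative_sgn assms(3-5) by blast
  then show "\<exists>y. (Dp_rat F f l has_real_derivative y) (at t) \<and> 0 < y"
    using \<open>F < f\<close> by (auto simp: sgn_if split: if_splits)
qed

lemma Dp_rat_equal_rates:
  assumes "Dp_region f f l t"
  shows "Dp_rat f f l t = 1 + (1-f)/(f-l)"
proof -
  have "Dp_num f f l t = (1-f)*(t*(t*(t-l)))"
    unfolding Dp_num_def by (simp add: algebra_simps power2_eq_square power3_eq_cube)
  moreover have "Dp_den f f l t = (f-l)*(t*(t*(t-l)))"
    unfolding Dp_den_def by (simp add: algebra_simps)
  moreover have "t*(t*(t-l)) \<noteq> 0" using assms unfolding Dp_region_def by auto
  ultimately show ?thesis unfolding Dp_rat_def by simp
qed

lemma mu_p_strict_mono: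
  assumes "fpd < 1" "0 < fps" "x < y"
  shows "mu_p fpd fps x < mu_p fpd fps y"
  using assms unfolding mu_p_def a_val_def by (simp add: mult.assoc mult_strict_right_mono)

lemma PA_set_bounds:
  assumes "0 < fpd" "fpd < 1" "0 < fps" "fps < 1" "0 < fsd" "0 < lp" "pq < 1"
    and "pa \<in> PA_set fpd fps fsd pq lp ls"
  defines "mu \<equiv> mu_p fpd fps pa"
  shows "Dp_region ((1-pq)*fsd) fpd lp mu" "mu < 1" "ls * mu < pq*fsd*(mu - lp)"
proof -
  define a where "a = pa * fps * (1 - fpd)"
  define F where "F = (1-pq)*fsd"
  have pa: "0 \<le> pa" "pa \<le> 1" "stable fpd fps fsd pq pa lp ls"
    using assms(8) unfolding PA_set_def by auto
  have mu: "mu = fpd + a" unfolding mu_def a_def mu_p_def a_val_def by simp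
  have a0: "0 \<le> a" unfolding a_def using pa assms by simp
  have "a \<le> fps * (1-fpd)" unfolding a_def using pa assms by (simp add: mult_left_le_one_le)
  moreover have "fps * (1-fpd) < 1 - fpd" using assms by simp
  ultimately show mu1: "mu < 1" unfolding mu by linarith
  have F0: "0 < F" unfolding F_def using assms by simp
  have "lp < F * mu / (F + a)"
    using pa(3) unfolding stable_def F_def a_def mu_def by (simp add: mult.commute)
  then have v: "lp * (F + a) < F * mu" using F0 a0 by (simp add: pos_less_divide_eq)
  have "lp * F < F * mu" using v a0 assms by (smt (verit) mult_left_mono)
  then have lmu: "lp < mu" using F0 by (simp add: mult.commute)
  then show "Dp_region ((1-pq)*fsd) fpd lp mu"
    using v mu a0 mu1 unfolding Dp_region_def F_def by (auto simp: algebra_simps)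
  have "ls < pq * fsd * (1 - lp / mu)" using pa(3) unfolding stable_def mu_def by simp
  then have "ls * mu < pq * fsd * (1 - lp / mu) * mu" using lmu assms by simp
  also have "\<dots> = pq*fsd*(mu - lp)" using lmu assms by (simp add: field_simps)
  finally show "ls * mu < pq*fsd*(mu - lp)" .
qed

lemma D_p_eq_Dp_rat:
  assumes "0 < lp" "Dp_region ((1-pq)*fsd) fpd lp (mu_p fpd fps pa)"
  shows "D_p fpd fps fsd pq pa lp = Dp_rat ((1-pq)*fsd) fpd lp (mu_p fpd fps pa)"
proof -
  define a where "a = a_val fpd fps pa"
  define mu where "mu = mu_p fpd fps pa"
  define F where "F = (1-pq)*fsd"
  define U where "U = mu - lp"
  define V where "V = (F-lp)*mu - lp*(F-fpd)"
  have a: "a = mu - fpd" unfolding a_def mu_def mu_p_def by simp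
  have nz: "lp \<noteq> 0" "mu \<noteq> 0" "U \<noteq> 0" "V \<noteq> 0"
    using assms unfolding Dp_region_def mu_def F_def U_def V_def by (auto simp: algebra_simps)
  have den: "((1-pq)*fsd + a) * lp^2 + mu * (- 2 * (1-pq)*fsd - a) * lp + (1-pq)*fsd * mu^2 = U*V"
    unfolding a F_def U_def V_def by algebra
  have "D_p fpd fps fsd pq pa lp
      = ((lp - lp^2)/U + (a * ((F - fpd)/mu - F - a) * lp^2 + a * mu * lp)/(U*V))/lp"
    unfolding D_p_def N_p_def N_sp_def Let_def a_def[symmetric] mu_def[symmetric] den
    unfolding F_def U_def by simp
  also have "\<dots> = ((lp - lp^2)*mu*V + (a * ((F - fpd) - F*mu - a*mu) * lp^2 + a*mu*mu*lp))
                   / (mu*U*V*lp)"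
    using nz by (simp add: field_simps)
  also have "\<dots> = (mu*U*V + Dp_num F fpd lp mu) * lp / (mu*U*V*lp)"
    unfolding Dp_num_def
    by (rule arg_cong[where f="\<lambda>x. x / (mu*U*V*lp)"]) (unfold U_def V_def a, algebra)
  also have "\<dots> = Dp_rat F fpd lp mu"
    unfolding Dp_rat_def Dp_den_def using nz
    unfolding U_def[symmetric] V_def[symmetric] by (simp add: field_simps)
  finally show ?thesis unfolding F_def mu_def .
qed

text \<open>The SU delay as a function of \<open>t = \<mu>\<^sub>p\<close>, with \<open>s = p\<^sub>q f\<^sub>s\<^sub>d\<close>, \<open>l = \<lambda>\<^sub>p\<close>, \<open>r = \<lambda>\<^sub>s\<close>.\<close>

definition Ds_rat :: "real \<Rightarrow> real \<Rightarrow> real \<Rightarrow> real \<Rightarrow> real" where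
  "Ds_rat s l r t = l*s*(1-t)/((t-l)*(s*(t-l) - r*t)) + (1-r)*t/(s*(t-l) - r*t)"

lemma D_s_eq_Ds_rat:
  assumes "0 < ls" "lp < mu_p fpd fps pa"
    and "ls * mu_p fpd fps pa < pq*fsd*(mu_p fpd fps pa - lp)"
  shows "D_s fpd fps fsd pq pa lp ls = Ds_rat (pq*fsd) lp ls (mu_p fpd fps pa)"
proof -
  define t where "t = mu_p fpd fps pa"
  define s where "s = pq*fsd"
  define U where "U = t - lp"
  define E where "E = s*U - ls*t"
  have nz: "U \<noteq> 0" "E \<noteq> 0" "ls \<noteq> 0" using assms unfolding t_def U_def E_def s_def by auto
  have C: "(ls - pq*fsd) * t + pq*fsd * lp = - E" unfolding E_def U_def s_def by (simp add: algebra_simps)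
  have "D_s fpd fps fsd pq pa lp ls
      = (lp * ls * (s*(t-1)) + (ls^2 - ls) * U * (U + lp)) / (U * (-E)) / ls"
    unfolding D_s_def N_s_def Let_def t_def[symmetric] C[symmetric] U_def s_def by simp
  also have "\<dots> = lp*s*(1-t)/(U*E) + (1-ls)*t/E"
    using nz unfolding U_def by (simp add: field_simps power2_eq_square)
  finally show ?thesis unfolding Ds_rat_def t_def s_def U_def E_def .
qed

lemma Ds_rat_strict_antimono:
  assumes "t1 < t2" "l < t1" "t2 < 1" "0 < l" "0 < r" "r < 1"
    and "r * t1 < s*(t1 - l)" "r * t2 < s*(t2 - l)"
  shows "Ds_rat s l r t2 < Ds_rat s l r t1"
proof -
  define E1 where "E1 = s*(t1-l) - r*t1"
  define E2 where "E2 = s*(t2-l) - r*t2"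
  have E1: "0 < E1" and E2: "0 < E2" using assms unfolding E1_def E2_def by auto
  have "0 < r*t1" using assms by simp
  then have "0 < s*(t1-l)" using assms(7) by linarith
  then have "0 < s" using assms by (simp add: zero_less_mult_iff)
  then have "0 < s*l" using assms by simp
  then have "r*t1 < s*t1" using assms(7) by (simp add: right_diff_distrib)
  then have "r < s" using assms by simp
  then have "0 < (s-r)*(t2-t1)" using assms by simp
  moreover have "E2 - E1 = (s-r)*(t2-t1)" unfolding E1_def E2_def by (simp add: algebra_simps)
  ultimately have "E1 < E2" by simp
  then have "(t1-l)*E1 < (t2-l)*E2" using E1 assms by (intro mult_strict_mono) auto
  moreover have "0 < (t1-l)*E1" using E1 assms by simp
  moreover have "0 \<le> l*s*(1-t2)" "l*s*(1-t2) < l*s*(1-t1)"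
    using assms \<open>r < s\<close> by auto
  ultimately have first: "l*s*(1-t2)/((t2-l)*E2) < l*s*(1-t1)/((t1-l)*E1)"
    by (simp add: frac_less)
  have "t1*E2 - t2*E1 = s*l*(t2-t1)" unfolding E1_def E2_def by (simp add: algebra_simps)
  moreover have "0 \<le> s*l*(t2-t1)" using assms \<open>r < s\<close> by simp
  ultimately have "t2/E2 \<le> t1/E1" using E1 E2 by (simp add: divide_le_eq le_divide_eq mult.commute)
  then have "(1-r)*t2/E2 \<le> (1-r)*t1/E1" using assms
    by (metis mult_left_mono diff_ge_0_iff_ge less_eq_real_def times_divide_eq_right)
  with first show ?thesis unfolding Ds_rat_def E1_def E2_def by linarith
qed

theorem lemma4:
  fixes fpd fps fsd pq lp ls :: real
  assumes "0 < fpd" "fpd < 1" "0 < fps" "fps < 1" "0 < fsd" "fsd < 1" "fpd < fsd"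
    and "0 < lp" "lp < 1" "0 < ls" "ls < 1" "0 < pq" "pq < 1"
  defines "S \<equiv> PA_set fpd fps fsd pq lp ls"
  shows "(pq < 1 - fpd / fsd \<longrightarrow>
            (\<forall>x\<in>S. \<forall>y\<in>S. x < y \<longrightarrow> D_p fpd fps fsd pq y lp < D_p fpd fps fsd pq x lp))
       \<and> (pq > 1 - fpd / fsd \<longrightarrow>
            (\<forall>x\<in>S. \<forall>y\<in>S. x < y \<longrightarrow> D_p fpd fps fsd pq x lp < D_p fpd fps fsd pq y lp))
       \<and> (pq = 1 - fpd / fsd \<longrightarrow>
            (\<forall>x\<in>S. \<forall>y\<in>S. D_p fpd fps fsd pq x lp = D_p fpd fps fsd pq y lp))
       \<and> (\<forall>x\<in>S. \<forall>y\<in>S. x < y \<longrightarrow> D_s fpd fps fsd pq y lp ls < D_s fpd fps fsd pq x lp ls)"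
proof -
  define F where "F = (1-pq)*fsd"
  define mu where "mu = mu_p fpd fps"
  note bounds = PA_set_bounds[where ls = ls, OF assms(1-5,8,13), folded S_def F_def mu_def]
  have mono: "mu x < mu y" if "x < y" for x y
    unfolding mu_def using mu_p_strict_mono assms(2,3) that by blast
  have Dp: "D_p fpd fps fsd pq x lp = Dp_rat F fpd lp (mu x)" if "x \<in> S" for x
    using D_p_eq_Dp_rat assms(8) bounds(1)[OF that] unfolding F_def mu_def by blast
  have Ds: "D_s fpd fps fsd pq x lp ls = Ds_rat (pq*fsd) lp ls (mu x)" if "x \<in> S" for x
    using D_s_eq_Ds_rat assms(10) bounds[OF that] unfolding Dp_region_def mu_def by blast
  have "pq < 1 - fpd / fsd \<longleftrightarrow> fpd < F" "pq > 1 - fpd / fsd \<longleftrightarrow> F < fpd"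
    "pq = 1 - fpd / fsd \<longleftrightarrow> F = fpd"
    unfolding F_def using assms by (auto simp: field_simps)
  moreover have "D_p fpd fps fsd pq y lp < D_p fpd fps fsd pq x lp"
    if "fpd < F" "x \<in> S" "y \<in> S" "x < y" for x y
    using Dp_rat_strict_antimono[OF mono[OF that(4)] that(1) assms(1,8,9) bounds(1)[OF that(2)]
        bounds(1)[OF that(3)]] Dp that by simp
  moreover have "D_p fpd fps fsd pq x lp < D_p fpd fps fsd pq y lp"
    if "F < fpd" "x \<in> S" "y \<in> S" "x < y" for x y
    using Dp_rat_strict_mono[OF mono[OF that(4)] that(1) assms(1,8,9) bounds(1)[OF that(2)]
        bounds(1)[OF that(3)]] Dp that by simp
  moreover have "D_p fpd fps fsd pq x lp = D_p fpd fps fsd pq y lp"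
    if "F = fpd" "x \<in> S" "y \<in> S" for x y
    using Dp_rat_equal_rates bounds(1) Dp that by simp
  moreover have "D_s fpd fps fsd pq y lp ls < D_s fpd fps fsd pq x lp ls"
    if "x \<in> S" "y \<in> S" "x < y" for x y
    using Ds_rat_strict_antimono[OF mono[OF that(3)] _ bounds(2)[OF that(2)] assms(8,10,11)
        bounds(3)[OF that(1)] bounds(3)[OF that(2)]] bounds(1)[OF that(1)] Ds that
    unfolding Dp_region_def by simp
  ultimately show ?thesis by blast
qed

end
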